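(* For every $x\in\mathbb T^3\setminus\mathfrak I$, the collisional invariant region $\mathcal S(x)$ is Lebesgue measurable.
   Context: $\mathbb{T}^3=\mathbb{R}^3/\mathbb{Z}^3$; $\omega(k)=\omega_0+\sum_{j=1}^3 2(1-\cos(2\pi k^j))$ with fixed $2<\omega_0<3$. Two wave vectors $x,y\in\mathbb{T}^3$ are connected by one collision if $\omega(y)=\omega(x)+\omega(y-x)$, or $\omega(x)=\omega(y)+\omega(x-y)$, or $\omega(x+y)=\omega(x)+\omega(y)$. The no-collision region $\mathfrak I$ is the set of $x\in\mathbb T^3$ such that no $y\in\mathbb T^3$ is connected to $x$ by one collision. For $x\in\mathbb T^3\setminus\mathfrak I$: $\mathcal S^1(x)$ is the set of $y$ connected to $x$ by one collision, $\mathcal S^n(x)=\bigcup_{z\in\mathcal S^{n-1}(x)}\mathcal S^1(z)$ for $n\ge2$, and $\mathcal S(x)=\bigcup_{n\ge1}\mathcal S^n(x)$. *)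

theory Defs
  imports "HOL-Analysis.Analysis"
begin

text \<open>The torus T^3 = R^3/Z^3 is represented by R^3 (type real^3); all notions below
  are Z^3-periodic, so a subset of T^3 is represented by its (periodic) preimage in R^3.
  Lebesgue measurability on T^3 corresponds to Lebesgue measurability of this preimage.\<close>

definition omega :: "real \<Rightarrow> real^3 \<Rightarrow> real" where
  "omega w0 k = w0 + (\<Sum>j\<in>UNIV. 2 * (1 - cos (2 * pi * (k $ j))))"

definition collides :: "real \<Rightarrow> real^3 \<Rightarrow> real^3 \<Rightarrow> bool" where
  "collides w0 x y \<longleftrightarrow>
     omega w0 y = omega w0 x + omega w0 (y - x) \<or>
     omega w0 x = omega w0 y + omega w0 (x - y) \<or>
     omega w0 (x + y) = omega w0 x + omega w0 y"

definition noCollision :: "real \<Rightarrow> (real^3) set" where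
  "noCollision w0 = {x. \<not> (\<exists>y. collides w0 x y)}"

definition S1 :: "real \<Rightarrow> real^3 \<Rightarrow> (real^3) set" where
  "S1 w0 x = {y. collides w0 x y}"

text \<open>Siter w0 n x is S^(n+1)(x).\<close>
primrec Siter :: "real \<Rightarrow> nat \<Rightarrow> real^3 \<Rightarrow> (real^3) set" where
  "Siter w0 0 x = S1 w0 x"
| "Siter w0 (Suc n) x = (\<Union>z\<in>Siter w0 n x. S1 w0 z)"

definition Sinv :: "real \<Rightarrow> real^3 \<Rightarrow> (real^3) set" where
  "Sinv w0 x = (\<Union>n. Siter w0 n x)"

end

theory Submission
  imports Defs
begin

text \<open>Each S^n(x) is closed: the collision relation is a closed subset of R^3 \<times> R^3, and
  because it is Z^3-periodic, the one-collision image of a closed periodic set only needs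
  starting points from the compact unit cube, and projecting a closed set along a compact
  factor gives a closed set. Hence S(x) is F-sigma, so Lebesgue measurable.\<close>

lemma fsigma_imp_sets_lebesgue:
  fixes S :: "'a::euclidean_space set"
  assumes "fsigma S"
  shows "S \<in> sets lebesgue"
  using assms
proof (induction rule: fsigma.induct)
  case (1 F)
  then have "F n \<in> sets lebesgue" for n
    by (simp add: borel_closed)
  then show ?case
    by blast
qed

lemma integer_translate_in_unit_cube:
  fixes z :: "real^'n"
  obtains m where "\<forall>j. m $ j \<in> \<int>" and "z + m \<in> cbox 0 1"
proof
  let ?m = "(\<chi> j. - of_int \<lfloor>z $ j\<rfloor>) :: real^'n"
  show "\<forall>j. ?m $ j \<in> \<int>"
    by simp
  have "0 \<le> z $ j - of_int \<lfloor>z $ j\<rfloor> \<and> z $ j - of_int \<lfloor>z $ j\<rfloor> \<le> 1" for j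
    using of_int_floor_le[of "z $ j"] real_of_int_floor_add_one_gt[of "z $ j"] by linarith
  then show "z + ?m \<in> cbox 0 1"
    by (simp add: mem_box_cart)
qed

lemma continuous_on_omega: "continuous_on UNIV (omega w0)"
  unfolding omega_def by (intro continuous_intros)

lemma omega_add_integer:
  assumes "\<forall>j. m $ j \<in> \<int>"
  shows "omega w0 (k + m) = omega w0 k"
proof -
  have "cos (2 * pi * ((k + m) $ j)) = cos (2 * pi * (k $ j))" for j
  proof -
    obtain n where n: "m $ j = of_int n"
      using assms Ints_cases by metis
    have "2 * pi * ((k + m) $ j) = 2 * pi * (k $ j) + 2 * pi * of_int n"
      by (simp add: n algebra_simps)
    then show ?thesis
      by (simp only: cos_add cos_int_2pin sin_int_2pin)
  qed
  then show ?thesis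
    unfolding omega_def by simp
qed

lemma collides_commute: "collides w0 x y \<longleftrightarrow> collides w0 y x"
  unfolding collides_def by (auto simp: add.commute)

lemma collides_add_integer_right:
  assumes m: "\<forall>j. m $ j \<in> \<int>"
  shows "collides w0 z (y + m) \<longleftrightarrow> collides w0 z y"
proof -
  have neg_m: "\<forall>j. (- m) $ j \<in> \<int>"
    using m by simp
  have "y + m - z = (y - z) + m" "z - (y + m) = (z - y) + - m" "z + (y + m) = (z + y) + m"
    by (simp_all add: algebra_simps)
  then show ?thesis
    unfolding collides_def by (simp only: omega_add_integer[OF m] omega_add_integer[OF neg_m])
qed

lemma collides_add_integer_left:
  assumes "\<forall>j. m $ j \<in> \<int>"
  shows "collides w0 (z + m) y \<longleftrightarrow> collides w0 z y"
  using collides_add_integer_right[OF assms] collides_commute by metis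

lemma closed_collides: "closed {p :: (real^3) \<times> (real^3). collides w0 (fst p) (snd p)}"
proof -
  have omega_cont: "continuous_on UNIV (\<lambda>p. omega w0 (f p))"
    if "continuous_on UNIV f" for f :: "(real^3) \<times> (real^3) \<Rightarrow> real^3"
    using continuous_on_compose2[OF continuous_on_omega that] by simp
  show ?thesis
    unfolding collides_def
    by (intro closed_Collect_disj closed_Collect_eq continuous_on_add omega_cont continuous_intros)
qed

lemma closed_UN_S1_compact:
  assumes "compact K"
  shows "closed (\<Union>z\<in>K. S1 w0 z)"
proof -
  have "(\<Union>z\<in>K. S1 w0 z) = {y. \<exists>z. z \<in> K \<and> (z, y) \<in> {p. collides w0 (fst p) (snd p)}}"
    by (auto simp: S1_def)
  then show ?thesis
    using closed_compact_projection[OF assms closed_collides] by simp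
qed

lemma UN_S1_periodic:
  assumes periodic: "\<And>z m. \<forall>j. m $ j \<in> \<int> \<Longrightarrow> z + m \<in> S \<longleftrightarrow> z \<in> S"
  shows "(\<Union>z\<in>S. S1 w0 z) = (\<Union>z\<in>S \<inter> cbox 0 1. S1 w0 z)"
proof
  show "(\<Union>z\<in>S. S1 w0 z) \<subseteq> (\<Union>z\<in>S \<inter> cbox 0 1. S1 w0 z)"
  proof
    fix y assume "y \<in> (\<Union>z\<in>S. S1 w0 z)"
    then obtain z where "z \<in> S" "collides w0 z y"
      by (auto simp: S1_def)
    moreover obtain m where "\<forall>j. m $ j \<in> \<int>" "z + m \<in> cbox 0 1"
      by (rule integer_translate_in_unit_cube)
    ultimately show "y \<in> (\<Union>z\<in>S \<inter> cbox 0 1. S1 w0 z)"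
      using periodic collides_add_integer_left by (fastforce simp: S1_def)
  qed
qed auto

lemma Siter_add_integer:
  assumes "\<forall>j. m $ j \<in> \<int>"
  shows "y + m \<in> Siter w0 n x \<longleftrightarrow> y \<in> Siter w0 n x"
  by (induction n arbitrary: y) (auto simp: S1_def collides_add_integer_right[OF assms])

lemma closed_Siter: "closed (Siter w0 n x)"
proof (induction n)
  case 0
  show ?case
    using closed_UN_S1_compact[of "{x}"] by simp
next
  case (Suc n)
  have "compact (Siter w0 n x \<inter> cbox 0 1)"
    using Suc.IH by (simp add: closed_Int_compact)
  then show ?case
    using closed_UN_S1_compact UN_S1_periodic[OF Siter_add_integer] by simp
qed

lemma fsigma_Sinv: "fsigma (Sinv w0 x)"
  unfolding Sinv_def by (intro fsigma.intros closed_Siter)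

theorem mainTheorem5:
  fixes w0 :: real and x :: "real^3"
  assumes "2 < w0" and "w0 < 3"
    and "x \<notin> noCollision w0"
  shows "Sinv w0 x \<in> sets lebesgue"
  using fsigma_Sinv by (rule fsigma_imp_sets_lebesgue)

end
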